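(* Define $h:\mathrm{T}^2\times\mathbb{R}^2\to[0,\infty]$ by $$h(\varepsilon,\vartheta):=\sup_{\zeta\in\mathbb{R}^2}\ \sup_{\tau\in\mathbb{R}^2}\Big\{(\varepsilon+\zeta\overset{s}{\otimes}\vartheta):(\tau\otimes\tau)\ \Big|\ (\mathrm{I}+\zeta\otimes\zeta):(\tau\otimes\tau)\le 1\Big\}.$$ Then $h$ equals the gauge $g_{\mathscr{C}}$ of the closed convex set $\mathscr{C}:=\{(\varepsilon,\vartheta)\in\mathrm{T}^2\times\mathbb{R}^2:\ \tfrac14\vartheta\otimes\vartheta+\varepsilon\preceq\mathrm{I}\}$. In particular, for every $\varepsilon\in\mathrm{T}^2$, $\vartheta\in\mathbb{R}^2$: $$h(\varepsilon,\vartheta)\le1\iff \tfrac14\,\vartheta\otimes\vartheta+\varepsilon\preceq\mathrm{I}.$$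
   Context: $\mathrm{T}^2$ denotes symmetric real $2\times2$ matrices; $A:B=\mathrm{tr}(A^\top B)$; $A\preceq B$ means $B-A$ is positive semi-definite; $\mathrm{I}$ is the identity; $a\overset{s}{\otimes}b=\frac12(a\otimes b+b\otimes a)$. For a closed convex set $K$ containing the origin, its gauge is $g_K(y)=\inf\{t\ge0: y\in tK\}$ (with $\inf\emptyset=+\infty$). *)

theory Defs
  imports "HOL-Analysis.Analysis"
begin

type_synonym mat2 = "real^2^2"
type_synonym vec2 = "real^2"

definition sym2 :: "mat2 \<Rightarrow> bool" where
  "sym2 A \<longleftrightarrow> transpose A = A"

definition frob :: "mat2 \<Rightarrow> mat2 \<Rightarrow> real" where
  "frob A B = trace (transpose A ** B)"

definition tens :: "vec2 \<Rightarrow> vec2 \<Rightarrow> mat2" where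
  "tens a b = (\<chi> i j. a $ i * b $ j)"

definition stens :: "vec2 \<Rightarrow> vec2 \<Rightarrow> mat2" where
  "stens a b = (1/2) *\<^sub>R (tens a b + tens b a)"

definition loewner_le :: "mat2 \<Rightarrow> mat2 \<Rightarrow> bool" where
  "loewner_le A B \<longleftrightarrow> (\<forall>x::vec2. 0 \<le> x \<bullet> ((B - A) *v x))"

text \<open>Gauge of a set K, valued in the extended reals (Inf {} = +\<infinity>).\<close>
definition gauge_of :: "'a::real_vector set \<Rightarrow> 'a \<Rightarrow> ereal" where
  "gauge_of K y = Inf {ereal t | t. t \<ge> 0 \<and> y \<in> (\<lambda>k. t *\<^sub>R k) ` K}"

definition hfun :: "mat2 \<Rightarrow> vec2 \<Rightarrow> ereal" where
  "hfun \<epsilon> \<theta> = (SUP \<zeta>::vec2. SUP \<tau>\<in>{\<tau>::vec2. frob (mat 1 + tens \<zeta> \<zeta>) (tens \<tau> \<tau>) \<le> 1}.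
       ereal (frob (\<epsilon> + stens \<zeta> \<theta>) (tens \<tau> \<tau>)))"

definition Cset :: "(mat2 \<times> vec2) set" where
  "Cset = {(\<epsilon>, \<theta>). sym2 \<epsilon> \<and> loewner_le ((1/4) *\<^sub>R tens \<theta> \<theta> + \<epsilon>) (mat 1)}"

end

theory Submission
  imports Defs
begin

(* Writing s = zeta . tau, the quantity maximised in h is the quadratic form
   (tau, s) |-> tau . eps tau + s (theta . tau), taken over the unit ball |tau|^2 + s^2 <= 1
   (s is unconstrained once tau <> 0).  So h <= c means that this form is dominated by
   c (|tau|^2 + s^2); minimising over s, at s = theta . tau / (2c), this becomes
   (theta . tau)^2 / 4 + c tau . eps tau <= c^2 |tau|^2, i.e. (eps, theta) lies in c C.
   The sublevel sets of h being the dilates of C, h is the gauge of C. *)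

lemma tens_mult_vec: "tens a b *v x = (b \<bullet> x) *\<^sub>R a"
  by (simp add: vec_eq_iff tens_def matrix_vector_mult_def inner_vec_def sum_distrib_left
      algebra_simps)

lemma frob_tens_self: "frob A (tens t t) = t \<bullet> (A *v t)"
  unfolding frob_def trace_def transpose_def matrix_matrix_mult_def tens_def matrix_vector_mult_def
  by (simp add: inner_vec_def sum_distrib_left algebra_simps) (subst sum.swap, simp add: algebra_simps)

lemma frob_id_plus_tens: "frob (mat 1 + tens z z) (tens t t) = t \<bullet> t + (z \<bullet> t)\<^sup>2"
  by (simp add: frob_tens_self matrix_vector_mult_add_rdistrib inner_add_right tens_mult_vec
      power2_eq_square inner_commute)

lemma frob_plus_stens: "frob (e + stens z th) (tens t t) = t \<bullet> (e *v t) + (z \<bullet> t) * (th \<bullet> t)"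
  by (simp add: frob_tens_self stens_def matrix_vector_mult_add_rdistrib inner_add_right
      tens_mult_vec scaleR_matrix_vector_assoc[symmetric] inner_commute algebra_simps)

lemma loewner_le_iff: "loewner_le A B \<longleftrightarrow> (\<forall>x. x \<bullet> (A *v x) \<le> x \<bullet> (B *v x))"
  by (simp add: loewner_le_def matrix_vector_mult_diff_rdistrib inner_diff_right)

lemma loewner_le_identity_iff:
  "loewner_le ((1/4) *\<^sub>R tens th th + e) (mat 1) \<longleftrightarrow> (\<forall>x. (th \<bullet> x)\<^sup>2 / 4 + x \<bullet> (e *v x) \<le> x \<bullet> x)"
  by (simp add: loewner_le_iff matrix_vector_mult_add_rdistrib inner_add_right
      scaleR_matrix_vector_assoc[symmetric] tens_mult_vec power2_eq_square inner_commute)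

lemma linear_le_quadratic_iff:
  fixes c q l T :: real
  assumes "c > 0"
  shows "(\<forall>s. q + s * l \<le> c * (T + s\<^sup>2)) \<longleftrightarrow> l\<^sup>2 / 4 + c * q \<le> c\<^sup>2 * T"
proof
  assume "\<forall>s. q + s * l \<le> c * (T + s\<^sup>2)"
  then have "c * (q + l / (2 * c) * l) \<le> c * (c * (T + (l / (2 * c))\<^sup>2))"
    using assms by (blast intro: mult_left_mono less_imp_le)
  moreover have "c * (q + l / (2 * c) * l) = c * q + l\<^sup>2 / 2"
    and "c * (c * (T + (l / (2 * c))\<^sup>2)) = c\<^sup>2 * T + l\<^sup>2 / 4"
    using assms by (simp_all add: field_simps power2_eq_square)
  ultimately show "l\<^sup>2 / 4 + c * q \<le> c\<^sup>2 * T" by linarith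
next
  assume bound: "l\<^sup>2 / 4 + c * q \<le> c\<^sup>2 * T"
  show "\<forall>s. q + s * l \<le> c * (T + s\<^sup>2)"
  proof
    fix s
    have "c * (c * (T + s\<^sup>2) - q - s * l) = (c\<^sup>2 * T - l\<^sup>2 / 4 - c * q) + (c * s - l / 2)\<^sup>2"
      by (simp add: power2_eq_square algebra_simps)
    also have "\<dots> \<ge> 0" using bound by simp
    finally show "q + s * l \<le> c * (T + s\<^sup>2)"
      using assms by (simp add: zero_le_mult_iff)
  qed
qed

(* For t <> 0, z \<bullet> t takes every real value, and the bound extends from the unit ball
   by 2-homogeneity of (t, s) |-> q t + s * l t. *)
lemma homogeneous_bound_iff:
  fixes q l :: "'a::real_inner \<Rightarrow> real" and c :: real
  assumes q: "\<And>r t. q (r *\<^sub>R t) = r\<^sup>2 * q t" and l: "\<And>r t. l (r *\<^sub>R t) = r * l t" and "c \<ge> 0"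
  shows "(\<forall>z t. t \<bullet> t + (z \<bullet> t)\<^sup>2 \<le> 1 \<longrightarrow> q t + (z \<bullet> t) * l t \<le> c) \<longleftrightarrow>
         (\<forall>t s. q t + s * l t \<le> c * (t \<bullet> t + s\<^sup>2))"
proof
  assume bound: "\<forall>z t. t \<bullet> t + (z \<bullet> t)\<^sup>2 \<le> 1 \<longrightarrow> q t + (z \<bullet> t) * l t \<le> c"
  show "\<forall>t s. q t + s * l t \<le> c * (t \<bullet> t + s\<^sup>2)"
  proof (intro allI)
    fix t s
    show "q t + s * l t \<le> c * (t \<bullet> t + s\<^sup>2)"
    proof (cases "t = 0")
      case True
      have "q 0 = 0" "l 0 = 0" using q[of 0 0] l[of 0 0] by simp_all
      then show ?thesis using True \<open>c \<ge> 0\<close> by simp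
    next
      case False
      define N where "N = sqrt (t \<bullet> t + s\<^sup>2)"
      have "N > 0" using False by (simp add: N_def add_pos_nonneg)
      have N2: "N\<^sup>2 = t \<bullet> t + s\<^sup>2" by (simp add: N_def)
      define u where "u = (1 / N) *\<^sub>R t"
      have "u \<noteq> 0" using False \<open>N > 0\<close> by (simp add: u_def)
      define z where "z = (s / N / (u \<bullet> u)) *\<^sub>R u"
      have zu: "z \<bullet> u = s / N" using \<open>u \<noteq> 0\<close> by (simp add: z_def)
      have "u \<bullet> u = t \<bullet> t / N\<^sup>2" by (simp add: u_def power2_eq_square)
      then have "u \<bullet> u + (z \<bullet> u)\<^sup>2 = 1"
        using \<open>N > 0\<close> by (simp add: zu power_divide add_divide_distrib[symmetric] N2[symmetric])
      then have "q u + (z \<bullet> u) * l u \<le> c" using bound by simp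
      moreover have "q u + (z \<bullet> u) * l u = (q t + s * l t) / N\<^sup>2"
        unfolding zu by (simp add: u_def q l power_divide add_divide_distrib power2_eq_square)
      ultimately have "(q t + s * l t) / N\<^sup>2 \<le> c" by simp
      then show ?thesis using \<open>N > 0\<close> unfolding N2[symmetric] by (simp add: pos_divide_le_eq mult.commute)
    qed
  qed
next
  assume "\<forall>t s. q t + s * l t \<le> c * (t \<bullet> t + s\<^sup>2)"
  then show "\<forall>z t. t \<bullet> t + (z \<bullet> t)\<^sup>2 \<le> 1 \<longrightarrow> q t + (z \<bullet> t) * l t \<le> c"
    using \<open>c \<ge> 0\<close> by (meson dual_order.trans mult_left_le)
qed

lemma hfun_le_ereal_iff:
  assumes "c > 0"
  shows "hfun e th \<le> ereal c \<longleftrightarrow> (\<forall>x. (th \<bullet> x)\<^sup>2 / 4 + c * (x \<bullet> (e *v x)) \<le> c\<^sup>2 * (x \<bullet> x))"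
proof -
  have "hfun e th \<le> ereal c \<longleftrightarrow>
      (\<forall>z t. t \<bullet> t + (z \<bullet> t)\<^sup>2 \<le> 1 \<longrightarrow> t \<bullet> (e *v t) + (z \<bullet> t) * (th \<bullet> t) \<le> c)"
    by (simp add: hfun_def SUP_le_iff frob_id_plus_tens frob_plus_stens)
  also have "\<dots> \<longleftrightarrow> (\<forall>t s. t \<bullet> (e *v t) + s * (th \<bullet> t) \<le> c * (t \<bullet> t + s\<^sup>2))"
    using assms
    by (intro homogeneous_bound_iff) (simp_all add: matrix_vector_mult_scaleR power2_eq_square)
  also have "\<dots> \<longleftrightarrow> (\<forall>x. (th \<bullet> x)\<^sup>2 / 4 + c * (x \<bullet> (e *v x)) \<le> c\<^sup>2 * (x \<bullet> x))"
    using linear_le_quadratic_iff[OF assms] by blast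
  finally show ?thesis .
qed

lemma hfun_nonneg: "0 \<le> hfun e th"
  unfolding hfun_def
  by (rule SUP_upper2[of 0], simp, rule SUP_upper2[of 0])
    (simp_all add: frob_id_plus_tens frob_plus_stens)

lemma convex_sublevel_square_plus_linear:
  fixes a b :: "'a::real_vector \<Rightarrow> real"
  assumes a: "linear a" and b: "linear b"
  shows "convex {p. (a p)\<^sup>2 + b p \<le> c}"
proof (rule convexI)
  fix p q and u v :: real
  assume p: "p \<in> {p. (a p)\<^sup>2 + b p \<le> c}" and q: "q \<in> {p. (a p)\<^sup>2 + b p \<le> c}"
    and "0 \<le> u" "0 \<le> v" "u + v = 1"
  have "v = 1 - u" using \<open>u + v = 1\<close> by simp
  then have "u * (a p)\<^sup>2 + v * (a q)\<^sup>2 - (u * a p + v * a q)\<^sup>2 = u * v * (a p - a q)\<^sup>2"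
    by (simp only:) (simp add: power2_eq_square algebra_simps)
  then have "(u * a p + v * a q)\<^sup>2 \<le> u * (a p)\<^sup>2 + v * (a q)\<^sup>2"
    using \<open>0 \<le> u\<close> \<open>0 \<le> v\<close> by (metis diff_ge_0_iff_ge mult_nonneg_nonneg zero_le_power2)
  moreover have "u * ((a p)\<^sup>2 + b p) + v * ((a q)\<^sup>2 + b q) \<le> u * c + v * c"
    using p q \<open>0 \<le> u\<close> \<open>0 \<le> v\<close> by (intro add_mono mult_left_mono) auto
  moreover have "u * c + v * c = c"
    using \<open>u + v = 1\<close> by (simp flip: distrib_right)
  moreover have "a (u *\<^sub>R p + v *\<^sub>R q) = u * a p + v * a q"
    and "b (u *\<^sub>R p + v *\<^sub>R q) = u * b p + v * b q"
    using a b by (simp_all add: linear_add linear_scale)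
  ultimately show "u *\<^sub>R p + v *\<^sub>R q \<in> {p. (a p)\<^sup>2 + b p \<le> c}"
    by (simp add: distrib_left)
qed

lemma mem_scaleR_image_iff:
  fixes K :: "'a::real_vector set"
  assumes "c \<noteq> 0"
  shows "y \<in> (\<lambda>k. c *\<^sub>R k) ` K \<longleftrightarrow> (1 / c) *\<^sub>R y \<in> K"
  using assms by (auto simp: image_iff intro!: bexI[of _ "(1 / c) *\<^sub>R y"])

lemma gauge_of_eqI:
  fixes K :: "'a::real_vector set"
  assumes "0 \<in> K" and "0 \<le> h"
    and scaled: "\<And>t. t > 0 \<Longrightarrow> h \<le> ereal t \<longleftrightarrow> y \<in> (\<lambda>k. t *\<^sub>R k) ` K"
  shows "gauge_of K y = h"
proof -
  let ?S = "{ereal t |t. t \<ge> 0 \<and> y \<in> (\<lambda>k. t *\<^sub>R k) ` K}"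
  have "h \<le> Inf ?S"
  proof (rule Inf_greatest)
    fix r assume "r \<in> ?S"
    then obtain t where r: "r = ereal t" and "t \<ge> 0" and y: "y \<in> (\<lambda>k. t *\<^sub>R k) ` K" by blast
    show "h \<le> r"
    proof (cases "t = 0")
      case True
      then have "y = 0" using y by auto
      have "h \<le> 0 + ereal d" if "d > 0" for d
        using scaled[OF that] \<open>0 \<in> K\<close> \<open>y = 0\<close> by force
      then have "h \<le> 0" by (rule ereal_le_epsilon2)
      then show ?thesis using r True by (simp add: zero_ereal_def)
    next
      case False
      then show ?thesis using scaled[of t] \<open>t \<ge> 0\<close> y r by simp
    qed
  qed
  moreover have "Inf ?S \<le> h"
  proof (rule dense_ge)
    fix r assume "h < r"
    show "Inf ?S \<le> r"
    proof (cases r)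
      case (real t)
      have "0 < r" using \<open>0 \<le> h\<close> \<open>h < r\<close> by (rule le_less_trans)
      with real have "t > 0" by simp
      with scaled[of t] \<open>h < r\<close> real have "ereal t \<in> ?S" by auto
      then show ?thesis using real by (simp add: Inf_lower)
    qed (use \<open>h < r\<close> in auto)
  qed
  ultimately show ?thesis unfolding gauge_of_def by simp
qed

lemma mem_Cset_iff:
  "(e, th) \<in> Cset \<longleftrightarrow> sym2 e \<and> (\<forall>x. (th \<bullet> x)\<^sup>2 / 4 + x \<bullet> (e *v x) \<le> x \<bullet> x)"
  by (simp add: Cset_def loewner_le_identity_iff)

lemma mem_scaled_Cset_iff:
  assumes "c > 0"
  shows "(e, th) \<in> (\<lambda>k. c *\<^sub>R k) ` Cset \<longleftrightarrow>
    sym2 e \<and> (\<forall>x. (th \<bullet> x)\<^sup>2 / 4 + c * (x \<bullet> (e *v x)) \<le> c\<^sup>2 * (x \<bullet> x))"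
proof -
  have "sym2 ((1 / c) *\<^sub>R e) \<longleftrightarrow> sym2 e"
    using assms by (simp add: sym2_def transpose_scalar)
  moreover have "((1 / c) *\<^sub>R th \<bullet> x)\<^sup>2 / 4 + x \<bullet> ((1 / c) *\<^sub>R e *v x) \<le> x \<bullet> x \<longleftrightarrow>
      (th \<bullet> x)\<^sup>2 / 4 + c * (x \<bullet> (e *v x)) \<le> c\<^sup>2 * (x \<bullet> x)" for x
    using assms by (simp add: scaleR_matrix_vector_assoc[symmetric] field_simps power2_eq_square)
  ultimately show ?thesis
    using assms by (simp add: mem_scaleR_image_iff mem_Cset_iff)
qed

lemma Cset_eq_Inter:
  "Cset = {p. sym2 (fst p)} \<inter> (\<Inter>x. {p. (snd p \<bullet> x / 2)\<^sup>2 + x \<bullet> (fst p *v x) \<le> x \<bullet> x})"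
  by (auto simp: Cset_def loewner_le_identity_iff power_divide)

lemma closed_Cset: "closed Cset"
proof -
  have "closed {p :: mat2 \<times> vec2. sym2 (fst p)}"
    unfolding sym2_def transpose_def by (auto intro!: closed_Collect_eq continuous_intros)
  moreover have "closed {p :: mat2 \<times> vec2. (snd p \<bullet> x / 2)\<^sup>2 + x \<bullet> (fst p *v x) \<le> x \<bullet> x}" for x
    unfolding matrix_vector_mult_def by (auto intro!: closed_Collect_le continuous_intros)
  ultimately show ?thesis
    unfolding Cset_eq_Inter by (intro closed_Int closed_INT) auto
qed

lemma convex_Cset: "convex Cset"
proof -
  have "subspace {p :: mat2 \<times> vec2. sym2 (fst p)}"
    by (auto simp: subspace_def sym2_def transpose_def vec_eq_iff)
  moreover have "linear (\<lambda>p :: mat2 \<times> vec2. x \<bullet> (fst p *v x))" for x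
    by (auto simp: linear_iff matrix_vector_mult_add_rdistrib inner_add_right
        scaleR_matrix_vector_assoc[symmetric])
  ultimately show ?thesis
    unfolding Cset_eq_Inter
    by (intro convex_Int convex_INT subspace_imp_convex convex_sublevel_square_plus_linear)
      (auto simp: linear_iff inner_add_left add_divide_distrib)
qed

theorem proposition4p1:
  shows "closed Cset \<and> convex Cset \<and> (0, 0) \<in> Cset \<and>
    (\<forall>\<epsilon> \<theta>. sym2 \<epsilon> \<longrightarrow>
       hfun \<epsilon> \<theta> = gauge_of Cset (\<epsilon>, \<theta>) \<and>
       (hfun \<epsilon> \<theta> \<le> 1 \<longleftrightarrow> loewner_le ((1/4) *\<^sub>R tens \<theta> \<theta> + \<epsilon>) (mat 1)))"
proof (intro conjI allI impI)
  show "closed Cset" by (rule closed_Cset)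
  show "convex Cset" by (rule convex_Cset)
  show zero_in_Cset: "(0, 0) \<in> Cset" by (simp add: mem_Cset_iff sym2_def transpose_def vec_eq_iff)
  fix e :: mat2 and th :: vec2
  assume "sym2 e"
  have "gauge_of Cset (e, th) = hfun e th"
  proof (rule gauge_of_eqI)
    show "0 \<in> Cset" using zero_in_Cset by (simp add: zero_prod_def)
    show "0 \<le> hfun e th" by (rule hfun_nonneg)
    show "hfun e th \<le> ereal t \<longleftrightarrow> (e, th) \<in> (\<lambda>k. t *\<^sub>R k) ` Cset" if "t > 0" for t
      using that \<open>sym2 e\<close> by (simp add: hfun_le_ereal_iff mem_scaled_Cset_iff)
  qed
  then show "hfun e th = gauge_of Cset (e, th)" ..
  show "hfun e th \<le> 1 \<longleftrightarrow> loewner_le ((1/4) *\<^sub>R tens th th + e) (mat 1)"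
    using hfun_le_ereal_iff[of 1 e th] by (simp add: one_ereal_def loewner_le_identity_iff)
qed

end
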